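(* For the single-choice constraint $\mathcal{F}=\{S\subseteq E:|S|\le1\}$, $\textsf{EoR}(\mathcal{F})=\textsf{PbM}(\mathcal{F})$.
   Context: Setting: $E$ is a finite ground set; each $e\in E$ has a nonnegative weight $w_e\sim D_e$, independently, $D=\times_e D_e$. Elements arrive one by one in a fixed order with their realized weights; an online algorithm (knowing $D$, possibly randomized) decides immediately and irrevocably upon each arrival whether to accept, keeping the accepted set in $\mathcal{F}$. $f(\boldsymbol{w})=\max_{S\in\mathcal{F}}\sum_{e\in S}w_e$ (here $=\max_e w_e$); $\boldsymbol{w}(\textsf{ALG}(\boldsymbol{w}))$ is the weight of the set selected by $\textsf{ALG}$. $\textsf{EoR}(\mathcal{F},D,\textsf{ALG})=\mathbf{E}[\boldsymbol{w}(\textsf{ALG}(\boldsymbol{w}))/f(\boldsymbol{w})]$, $\textsf{PbM}(\mathcal{F},D,\textsf{ALG})=\Pr[\boldsymbol{w}(\textsf{ALG}(\boldsymbol{w}))=f(\boldsymbol{w})]$; $\textsf{EoR}(\mathcal{F})=\inf_D\sup_{\textsf{ALG}}\textsf{EoR}(\mathcal{F},D,\textsf{ALG})$ and $\textsf{PbM}(\mathcal{F})=\inf_D\sup_{\textsf{ALG}}\textsf{PbM}(\mathcal{F},D,\textsf{ALG})$, the infima over product distributions. *)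

theory Defs
  imports "HOL-Probability.Probability"
begin

text \<open>Single-choice prophet setting. The ground set is E = {0..<n}, elements
arrive in the order 0, 1, ..., n-1. A weight vector is w :: nat \<Rightarrow> real
(only coordinates below n matter).\<close>

definition single_choice :: "nat \<Rightarrow> nat set set" where
  "single_choice n = {S. S \<subseteq> {..<n} \<and> card S \<le> 1}"

definition opt_val :: "nat \<Rightarrow> (nat \<Rightarrow> real) \<Rightarrow> real" where
  "opt_val n w = Max ((\<lambda>S. sum w S) ` single_choice n)"

definition weight_dists :: "nat \<Rightarrow> (nat \<Rightarrow> real measure) set" where
  "weight_dists n = {D. \<forall>e<n. prob_space (D e) \<and> sets (D e) = sets borel
                              \<and> (AE x in D e. 0 \<le> x)}"

text \<open>A r i w = True means: on arrival of element i, if nothing has been accepted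
yet, accept i.\<close>
definition online_algs :: "nat \<Rightarrow> (real \<Rightarrow> nat \<Rightarrow> (nat \<Rightarrow> real) \<Rightarrow> bool) set" where
  "online_algs n = {A.
     (\<forall>r i w w'. (\<forall>j\<le>i. w j = w' j) \<longrightarrow> A r i w = A r i w') \<and>
     (\<forall>i<n. (\<lambda>(r, w). A r i w) \<in> measurable (borel \<Otimes>\<^sub>M (PiM {..<n} (\<lambda>_. borel)))
                                          (count_space UNIV))}"

definition alg_set :: "nat \<Rightarrow> (real \<Rightarrow> nat \<Rightarrow> (nat \<Rightarrow> real) \<Rightarrow> bool) \<Rightarrow> real \<Rightarrow> (nat \<Rightarrow> real) \<Rightarrow> nat set" where
  "alg_set n A r w = (if \<exists>i<n. A r i w then {LEAST i. i < n \<and> A r i w} else {})"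

definition alg_val :: "nat \<Rightarrow> (real \<Rightarrow> nat \<Rightarrow> (nat \<Rightarrow> real) \<Rightarrow> bool) \<Rightarrow> real \<Rightarrow> (nat \<Rightarrow> real) \<Rightarrow> real" where
  "alg_val n A r w = sum w (alg_set n A r w)"

definition joint_space :: "nat \<Rightarrow> (nat \<Rightarrow> real measure) \<Rightarrow> (real \<times> (nat \<Rightarrow> real)) measure" where
  "joint_space n D = uniform_measure lborel {0..1} \<Otimes>\<^sub>M PiM {..<n} D"

text \<open>Ratio w(ALG)/f(w), with the convention 0/0 = 1 (when f(w) = 0 the
algorithm trivially attains the optimum).\<close>
definition ratio :: "real \<Rightarrow> real \<Rightarrow> real" where
  "ratio a b = (if b = 0 then 1 else a / b)"

definition EoR :: "nat \<Rightarrow> (nat \<Rightarrow> real measure) \<Rightarrow> (real \<Rightarrow> nat \<Rightarrow> (nat \<Rightarrow> real) \<Rightarrow> bool) \<Rightarrow> real" where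
  "EoR n D A = (\<integral>x. ratio (alg_val n A (fst x) (snd x)) (opt_val n (snd x)) \<partial>joint_space n D)"

definition PbM :: "nat \<Rightarrow> (nat \<Rightarrow> real measure) \<Rightarrow> (real \<Rightarrow> nat \<Rightarrow> (nat \<Rightarrow> real) \<Rightarrow> bool) \<Rightarrow> real" where
  "PbM n D A = measure (joint_space n D)
      {x \<in> space (joint_space n D). alg_val n A (fst x) (snd x) = opt_val n (snd x)}"

definition EoR_single :: "nat \<Rightarrow> real" where
  "EoR_single n = (INF D \<in> weight_dists n. SUP A \<in> online_algs n. EoR n D A)"

definition PbM_single :: "nat \<Rightarrow> real" where
  "PbM_single n = (INF D \<in> weight_dists n. SUP A \<in> online_algs n. PbM n D A)"

end

theory Submission
  imports Defs
begin

text \<open>Since w(ALG)/f(w) is at least the indicator of w(ALG) = f(w), PbM never exceeds EoR.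
Conversely, fix D and replace every weight w by exp(K w); the transformed distributions are
again admissible. An online algorithm facing the transformed weights can be simulated on the
original ones. Whenever it misses the maximum of w, either its pick lies at least \<delta> below that
maximum, so that its ratio is at most exp(-K \<delta>), or two weights differ by a positive amount
less than \<delta>. The latter event has vanishing probability as \<delta> tends to 0, so for large K the
best EoR on the transformed instance exceeds the best PbM on D by arbitrarily little.\<close>

type_synonym alg = "real \<Rightarrow> nat \<Rightarrow> (nat \<Rightarrow> real) \<Rightarrow> bool"

lemma single_choice_eq: "single_choice n = insert {} ((\<lambda>i. {i}) ` {..<n})"
proof (intro set_eqI iffI)
  fix S assume "S \<in> single_choice n"
  then have "S \<subseteq> {..<n}" "card S \<le> 1" "finite S"
    unfolding single_choice_def by (auto intro: finite_subset)
  then show "S \<in> insert {} ((\<lambda>i. {i}) ` {..<n})"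
    by (metis One_nat_def card_0_eq card_1_singletonE image_eqI insertCI insert_subset
        le_Suc_eq le_zero_eq lessThan_iff)
qed (auto simp: single_choice_def)

lemma opt_val_eq_Max: "opt_val n w = Max (insert 0 (w ` {..<n}))"
proof -
  have "(\<lambda>S. sum w S) ` single_choice n = insert 0 (w ` {..<n})"
    unfolding single_choice_eq by (auto simp: image_image)
  then show ?thesis unfolding opt_val_def by simp
qed

lemma opt_val_nonneg: "0 \<le> opt_val n w"
  and opt_val_ge: "i < n \<Longrightarrow> w i \<le> opt_val n w"
  unfolding opt_val_eq_Max by auto

lemma opt_val_attained:
  assumes "0 < n" and "\<forall>j<n. 0 \<le> w j"
  obtains m where "m < n" and "opt_val n w = w m"
proof -
  have "Max (w ` {..<n}) \<in> w ` {..<n}" using assms(1) by (intro Max_in) auto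
  then obtain m where "m < n" "Max (w ` {..<n}) = w m" by auto
  moreover have "opt_val n w = max 0 (Max (w ` {..<n}))"
    unfolding opt_val_eq_Max using assms(1) by (subst Max_insert) auto
  ultimately show ?thesis using assms(2) that by auto
qed

lemma alg_set_cases:
  obtains (none) "alg_set n A r w = {}" and "\<forall>i<n. \<not> A r i w"
  | (first) i where "i < n" and "alg_set n A r w = {i}" and "A r i w" and "\<forall>j<i. \<not> A r j w"
proof (cases "\<exists>i<n. A r i w")
  case True
  define i where "i = (LEAST i. i < n \<and> A r i w)"
  have "i < n \<and> A r i w" using True unfolding i_def by (metis (mono_tags, lifting) LeastI)
  moreover have "\<forall>j<i. \<not> A r j w" using i_def not_less_Least calculation by force
  ultimately show ?thesis using True first unfolding alg_set_def i_def[symmetric] by auto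
qed (use none in \<open>auto simp: alg_set_def\<close>)

lemma alg_val_eq_sum:
  "alg_val n A r w = (\<Sum>i<n. if A r i w \<and> (\<forall>j<i. \<not> A r j w) then w i else 0)"
proof (cases rule: alg_set_cases[of n A r w])
  case none
  then show ?thesis by (auto simp: alg_val_def intro!: sum.neutral[symmetric])
next
  case (first i)
  then have "\<And>k. k < n \<Longrightarrow> (A r k w \<and> (\<forall>j<k. \<not> A r j w)) \<longleftrightarrow> k = i"
    by (metis linorder_neqE_nat)
  then have "(\<Sum>k<n. if A r k w \<and> (\<forall>j<k. \<not> A r j w) then w k else 0)
      = (\<Sum>k<n. if k = i then w k else 0)"
    by (intro sum.cong) auto
  with first show ?thesis by (simp add: alg_val_def)
qed

lemma alg_val_le_opt_val: "alg_val n A r w \<le> opt_val n w"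
  by (cases rule: alg_set_cases[of n A r w]) (auto simp: alg_val_def opt_val_nonneg opt_val_ge)

lemma alg_val_nonneg: "\<forall>j<n. 0 \<le> w j \<Longrightarrow> 0 \<le> alg_val n A r w"
  by (cases rule: alg_set_cases[of n A r w]) (auto simp: alg_val_def)

lemma ratio_alg_opt_le_1: "ratio (alg_val n A r w) (opt_val n w) \<le> 1"
  using alg_val_le_opt_val[of n A r w] opt_val_nonneg[of n w]
  by (auto simp: ratio_def divide_le_eq_1)

lemma ratio_alg_opt_nonneg: "\<forall>j<n. 0 \<le> w j \<Longrightarrow> 0 \<le> ratio (alg_val n A r w) (opt_val n w)"
  using alg_val_nonneg[of n w A r] opt_val_nonneg[of n w] by (simp add: ratio_def)

lemma of_bool_alg_eq_opt_le_ratio: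
  assumes "\<forall>j<n. 0 \<le> w j"
  shows "of_bool (alg_val n A r w = opt_val n w) \<le> ratio (alg_val n A r w) (opt_val n w)"
proof (cases "alg_val n A r w = opt_val n w")
  case True
  then show ?thesis by (simp add: ratio_def)
qed (simp add: ratio_alg_opt_nonneg[OF assms])

lemma online_algs_prefix_cong:
  "A \<in> online_algs n \<Longrightarrow> (\<And>j. j \<le> i \<Longrightarrow> w j = v j) \<Longrightarrow> A r i w = A r i v"
  unfolding online_algs_def by blast

abbreviation joint_borel :: "nat \<Rightarrow> (real \<times> (nat \<Rightarrow> real)) measure" where
  "joint_borel n \<equiv> borel \<Otimes>\<^sub>M PiM {..<n} (\<lambda>_. borel)"

lemma alg_val_measurable:
  assumes "A \<in> online_algs n"
  shows "(\<lambda>x. alg_val n A (fst x) (snd x)) \<in> borel_measurable (joint_borel n)"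
proof -
  have [measurable]: "\<And>i. i < n \<Longrightarrow> Measurable.pred (joint_borel n) (\<lambda>x. A (fst x) i (snd x))"
    using assms unfolding online_algs_def pred_def by (auto simp: case_prod_beta')
  have [measurable]: "\<And>i. i < n \<Longrightarrow> (\<lambda>x. snd x i) \<in> borel_measurable (joint_borel n)"
    by measurable
  show ?thesis unfolding alg_val_eq_sum by measurable
qed

lemma opt_val_measurable: "(\<lambda>x. opt_val n (snd x)) \<in> borel_measurable (joint_borel n)"
  unfolding opt_val_def
proof (rule borel_measurable_Max)
  show "finite (single_choice n)" unfolding single_choice_eq by auto
  fix S assume "S \<in> single_choice n"
  then have "S \<subseteq> {..<n}" unfolding single_choice_def by auto
  then show "(\<lambda>x. sum (snd x) S) \<in> borel_measurable (joint_borel n)"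
    by (intro borel_measurable_sum) auto
qed

lemma weight_dists_prob_space: "D \<in> weight_dists n \<Longrightarrow> i < n \<Longrightarrow> prob_space (D i)"
  and weight_dists_sets: "D \<in> weight_dists n \<Longrightarrow> i < n \<Longrightarrow> sets (D i) = sets borel"
  and weight_dists_AE_nonneg: "D \<in> weight_dists n \<Longrightarrow> i < n \<Longrightarrow> AE x in D i. 0 \<le> x"
  unfolding weight_dists_def by auto

lemma prob_space_joint_space: "D \<in> weight_dists n \<Longrightarrow> prob_space (joint_space n D)"
  unfolding joint_space_def
  by (intro prob_space_pair prob_space_uniform_measure prob_space_PiM)
     (auto dest: weight_dists_prob_space)

lemma sets_joint_space: "D \<in> weight_dists n \<Longrightarrow> sets (joint_space n D) = sets (joint_borel n)"
  unfolding joint_space_def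
  by (intro sets_pair_measure_cong sets_PiM_cong) (auto dest: weight_dists_sets)

lemma space_joint_space: "D \<in> weight_dists n \<Longrightarrow> space (joint_space n D) = space (joint_borel n)"
  using sets_joint_space sets_eq_imp_space_eq by blast

lemma measurable_joint_space:
  "D \<in> weight_dists n \<Longrightarrow> measurable (joint_space n D) M = measurable (joint_borel n) M"
  by (rule measurable_cong_sets[OF sets_joint_space refl])

lemma AE_joint_space_nonneg:
  assumes D: "D \<in> weight_dists n"
  shows "AE x in joint_space n D. \<forall>j<n. 0 \<le> snd x j"
proof -
  interpret P: prob_space "PiM {..<n} D"
    using D by (intro prob_space_PiM) (auto dest: weight_dists_prob_space)
  interpret U: prob_space "uniform_measure lborel {0..1::real}"
    by (rule prob_space_uniform_measure) auto
  interpret pair_sigma_finite "uniform_measure lborel {0..1::real}" "PiM {..<n} D" ..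
  have "AE w in PiM {..<n} D. \<forall>j\<in>{..<n}. 0 \<le> w j"
    using D by (intro AE_finite_allI AE_PiM_component)
      (auto dest: weight_dists_prob_space weight_dists_AE_nonneg)
  then have "AE w in PiM {..<n} D. \<forall>j<n. 0 \<le> w j" by (rule eventually_mono) auto
  then have "AE x in uniform_measure lborel {0..1::real} \<Otimes>\<^sub>M PiM {..<n} D. \<forall>j<n. 0 \<le> snd x j"
  proof (intro AE_pair_measure)
    have "{x \<in> space (joint_space n D). \<forall>j<n. 0 \<le> snd x j} \<in> sets (joint_space n D)"
      unfolding sets_joint_space[OF D] space_joint_space[OF D] by measurable
    then show "{x \<in> space (uniform_measure lborel {0..1::real} \<Otimes>\<^sub>M PiM {..<n} D). \<forall>j<n. 0 \<le> snd x j}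
        \<in> sets (uniform_measure lborel {0..1::real} \<Otimes>\<^sub>M PiM {..<n} D)"
      unfolding joint_space_def .
  qed simp
  then show ?thesis unfolding joint_space_def .
qed

lemma ratio_alg_opt_measurable:
  assumes "A \<in> online_algs n" and "D \<in> weight_dists n"
  shows "(\<lambda>x. ratio (alg_val n A (fst x) (snd x)) (opt_val n (snd x)))
    \<in> borel_measurable (joint_space n D)"
proof -
  note [measurable] = alg_val_measurable[OF assms(1)] opt_val_measurable
  show ?thesis unfolding measurable_joint_space[OF assms(2)] ratio_def by measurable
qed

lemma success_set_sets:
  assumes "A \<in> online_algs n" and "D \<in> weight_dists n"
  shows "{x \<in> space (joint_space n D). alg_val n A (fst x) (snd x) = opt_val n (snd x)}
    \<in> sets (joint_space n D)"
proof -
  note [measurable] = alg_val_measurable[OF assms(1)] opt_val_measurable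
  show ?thesis unfolding sets_joint_space[OF assms(2)] space_joint_space[OF assms(2)]
    by measurable
qed

lemma integrable_ratio_alg_opt:
  assumes A: "A \<in> online_algs n" and D: "D \<in> weight_dists n"
  shows "integrable (joint_space n D) (\<lambda>x. ratio (alg_val n A (fst x) (snd x)) (opt_val n (snd x)))"
proof -
  interpret prob_space "joint_space n D" by (rule prob_space_joint_space[OF D])
  show ?thesis
  proof (rule integrable_const_bound[where B = 1])
    show "AE x in joint_space n D. norm (ratio (alg_val n A (fst x) (snd x)) (opt_val n (snd x))) \<le> 1"
      using AE_joint_space_nonneg[OF D] by (rule eventually_mono)
        (use ratio_alg_opt_le_1 ratio_alg_opt_nonneg in force)
  qed (rule ratio_alg_opt_measurable[OF A D])
qed

section \<open>Comparing PbM and EoR\<close>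

lemma EoR_le_1:
  assumes A: "A \<in> online_algs n" and D: "D \<in> weight_dists n"
  shows "EoR n D A \<le> 1"
proof -
  interpret prob_space "joint_space n D" by (rule prob_space_joint_space[OF D])
  have "EoR n D A \<le> (\<integral>_. 1 \<partial>joint_space n D)"
    unfolding EoR_def
    by (intro integral_mono integrable_ratio_alg_opt[OF A D]) (auto simp: ratio_alg_opt_le_1)
  then show ?thesis by (simp add: prob_space)
qed

lemma EoR_nonneg:
  assumes "D \<in> weight_dists n"
  shows "0 \<le> EoR n D A"
  unfolding EoR_def using AE_joint_space_nonneg[OF assms]
  by (rule integral_nonneg_AE[OF eventually_mono]) (rule ratio_alg_opt_nonneg)

lemma PbM_nonneg: "0 \<le> PbM n D A"
  unfolding PbM_def by (rule measure_nonneg)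

lemma PbM_le_1: "D \<in> weight_dists n \<Longrightarrow> PbM n D A \<le> 1"
  unfolding PbM_def using prob_space.prob_le_1[OF prob_space_joint_space] by blast

lemma PbM_le_EoR:
  assumes A: "A \<in> online_algs n" and D: "D \<in> weight_dists n"
  shows "PbM n D A \<le> EoR n D A"
proof -
  interpret prob_space "joint_space n D" by (rule prob_space_joint_space[OF D])
  let ?S = "{x \<in> space (joint_space n D). alg_val n A (fst x) (snd x) = opt_val n (snd x)}"
  have "PbM n D A = (\<integral>x. indicator ?S x \<partial>joint_space n D)"
    unfolding PbM_def by (simp add: Int_absorb2)
  also have "\<dots> \<le> EoR n D A"
    unfolding EoR_def
  proof (rule integral_mono_AE')
    show "AE x in joint_space n D. indicator ?S x \<le> ratio (alg_val n A (fst x) (snd x)) (opt_val n (snd x))"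
      using AE_joint_space_nonneg[OF D]
    proof eventually_elim
      case (elim x)
      have "indicator ?S x \<le> (of_bool (alg_val n A (fst x) (snd x) = opt_val n (snd x)) :: real)"
        by (simp add: indicator_def)
      also have "\<dots> \<le> ratio (alg_val n A (fst x) (snd x)) (opt_val n (snd x))"
        using elim by (rule of_bool_alg_eq_opt_le_ratio)
      finally show ?case .
    qed
    show "AE x in joint_space n D. 0 \<le> ratio (alg_val n A (fst x) (snd x)) (opt_val n (snd x))"
      using AE_joint_space_nonneg[OF D] by (rule eventually_mono) (rule ratio_alg_opt_nonneg)
  qed (rule integrable_ratio_alg_opt[OF A D])
  finally show ?thesis .
qed

lemma online_algs_nonempty: "online_algs n \<noteq> {}"
proof -
  have "(\<lambda>r i w. False) \<in> online_algs n" unfolding online_algs_def by auto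
  then show ?thesis by blast
qed

lemma weight_dists_nonempty: "weight_dists n \<noteq> {}"
proof -
  have "(\<lambda>_. return borel 0) \<in> weight_dists n"
    unfolding weight_dists_def by (auto intro!: prob_space_return simp: AE_return)
  then show ?thesis by blast
qed

lemma bdd_above_EoR: "D \<in> weight_dists n \<Longrightarrow> bdd_above (EoR n D ` online_algs n)"
  by (rule bdd_aboveI[of _ 1]) (auto intro: EoR_le_1)

lemma bdd_above_PbM: "D \<in> weight_dists n \<Longrightarrow> bdd_above (PbM n D ` online_algs n)"
  by (rule bdd_aboveI[of _ 1]) (auto intro: PbM_le_1)

lemma SUP_EoR_nonneg: "D \<in> weight_dists n \<Longrightarrow> 0 \<le> (SUP A \<in> online_algs n. EoR n D A)"
  using online_algs_nonempty by (auto intro: cSUP_upper2[OF bdd_above_EoR] EoR_nonneg)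

lemma SUP_PbM_nonneg: "D \<in> weight_dists n \<Longrightarrow> 0 \<le> (SUP A \<in> online_algs n. PbM n D A)"
  using online_algs_nonempty by (auto intro: cSUP_upper2[OF bdd_above_PbM] PbM_nonneg)

lemma SUP_PbM_le_SUP_EoR:
  assumes "D \<in> weight_dists n"
  shows "(SUP A \<in> online_algs n. PbM n D A) \<le> (SUP A \<in> online_algs n. EoR n D A)"
  by (rule cSUP_mono[OF online_algs_nonempty bdd_above_EoR[OF assms]])
    (use PbM_le_EoR[OF _ assms] in blast)

section \<open>Near ties\<close>

definition near_ties :: "'a measure \<Rightarrow> 'i set \<Rightarrow> ('i \<Rightarrow> 'a \<Rightarrow> real) \<Rightarrow> real \<Rightarrow> 'a set" where
  "near_ties M I X \<delta> = {x \<in> space M. \<exists>a\<in>I. \<exists>b\<in>I. 0 < X b x - X a x \<and> X b x - X a x < \<delta>}"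

lemma near_ties_sets:
  assumes "finite I" and [measurable]: "\<And>i. i \<in> I \<Longrightarrow> X i \<in> borel_measurable M"
  shows "near_ties M I X \<delta> \<in> sets M"
  unfolding near_ties_def using assms(1) by measurable

lemma near_ties_mono: "\<delta> \<le> \<delta>' \<Longrightarrow> near_ties M I X \<delta> \<subseteq> near_ties M I X \<delta>'"
  unfolding near_ties_def by fastforce

lemma INT_near_ties_empty:
  assumes "finite I"
  shows "(\<Inter>m::nat. near_ties M I X (1 / Suc m)) = {}"
proof (rule ccontr)
  assume "(\<Inter>m. near_ties M I X (1 / Suc m)) \<noteq> {}"
  then obtain x where x: "\<And>m. x \<in> near_ties M I X (1 / Suc m)" by blast
  let ?G = "{d. \<exists>a\<in>I. \<exists>b\<in>I. d = X b x - X a x \<and> 0 < d}"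
  have gap: "X b x - X a x \<in> ?G" if "a \<in> I" "b \<in> I" "0 < X b x - X a x" for a b
    using that by blast
  have "?G \<subseteq> (\<lambda>(a, b). X b x - X a x) ` (I \<times> I)" by force
  then have fin: "finite ?G" using assms by (auto intro: finite_subset)
  have "?G \<noteq> {}" using x[of 0] gap unfolding near_ties_def by blast
  then have "0 < Min ?G" using Min_in[OF fin] by auto
  then obtain m :: nat where m: "inverse (real (Suc m)) < Min ?G"
    using reals_Archimedean by blast
  from x[of m] obtain a b where ab: "a \<in> I" "b \<in> I" "0 < X b x - X a x" "X b x - X a x < 1 / Suc m"
    unfolding near_ties_def by blast
  then have "Min ?G \<le> X b x - X a x" using gap by (intro Min_le[OF fin])
  with m ab(4) show False by (simp add: inverse_eq_divide)
qed

lemma (in finite_measure) measure_near_ties_small: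
  assumes "finite I" and "\<And>i. i \<in> I \<Longrightarrow> X i \<in> borel_measurable M" and "0 < \<epsilon>"
  obtains \<delta> where "0 < \<delta>" and "measure M (near_ties M I X \<delta>) < \<epsilon>"
proof -
  let ?N = "\<lambda>m::nat. near_ties M I X (1 / Suc m)"
  have "range ?N \<subseteq> sets M" using near_ties_sets[of I X M] assms(1,2) by blast
  moreover have "decseq ?N" by (intro decseq_SucI near_ties_mono) (simp add: frac_le)
  ultimately have "(\<lambda>m. measure M (?N m)) \<longlonglongrightarrow> measure M (\<Inter>m. ?N m)"
    by (rule finite_Lim_measure_decseq)
  then have "(\<lambda>m. measure M (?N m)) \<longlonglongrightarrow> 0"
    unfolding INT_near_ties_empty[OF assms(1)] by simp
  then have "eventually (\<lambda>m. measure M (?N m) < \<epsilon>) sequentially"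
    using assms(3) by (rule order_tendstoD)
  then obtain m where "measure M (?N m) < \<epsilon>" by (auto simp: eventually_sequentially)
  then show ?thesis using that[of "1 / Suc m"] by simp
qed

section \<open>The exponential transformation\<close>

definition exp_dists :: "real \<Rightarrow> (nat \<Rightarrow> real measure) \<Rightarrow> nat \<Rightarrow> real measure" where
  "exp_dists K D i = distr (D i) borel (\<lambda>x. exp (K * x))"

definition exp_weights :: "nat \<Rightarrow> real \<Rightarrow> (nat \<Rightarrow> real) \<Rightarrow> nat \<Rightarrow> real" where
  "exp_weights n K w = (\<lambda>j\<in>{..<n}. exp (K * w j))"

definition exp_alg :: "nat \<Rightarrow> real \<Rightarrow> alg \<Rightarrow> alg" where
  "exp_alg n K A r i w = A r i (exp_weights n K w)"

lemma exp_weights_measurable [measurable]: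
  "exp_weights n K \<in> measurable (PiM {..<n} (\<lambda>_. borel)) (PiM {..<n} (\<lambda>_. borel))"
  unfolding exp_weights_def by measurable

lemma exp_dists_weight_dists:
  assumes D: "D \<in> weight_dists n"
  shows "exp_dists K D \<in> weight_dists n"
  unfolding weight_dists_def
proof (intro CollectI allI impI conjI)
  fix i assume i: "i < n"
  have m: "(\<lambda>x. exp (K * x)) \<in> measurable (D i) borel"
    by (subst measurable_cong_sets[OF weight_dists_sets[OF D i] refl]) measurable
  show "prob_space (exp_dists K D i)"
    unfolding exp_dists_def by (rule prob_space.prob_space_distr[OF weight_dists_prob_space[OF D i] m])
  show "sets (exp_dists K D i) = sets borel" unfolding exp_dists_def by simp
  show "AE x in exp_dists K D i. 0 \<le> x" unfolding exp_dists_def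
    by (subst AE_distr_iff[OF m]) auto
qed

lemma exp_alg_online:
  assumes A: "A \<in> online_algs n"
  shows "exp_alg n K A \<in> online_algs n"
  unfolding online_algs_def
proof (intro CollectI conjI allI impI)
  fix r i and w w' :: "nat \<Rightarrow> real" assume "\<forall>j\<le>i. w j = w' j"
  then show "exp_alg n K A r i w = exp_alg n K A r i w'"
    unfolding exp_alg_def using A by (intro online_algs_prefix_cong) (auto simp: exp_weights_def)
next
  fix i assume "i < n"
  then have "(\<lambda>(r, w). A r i w) \<in> measurable (joint_borel n) (count_space UNIV)"
    using A unfolding online_algs_def by auto
  moreover have "(\<lambda>(r, w). (r, exp_weights n K w)) \<in> measurable (joint_borel n) (joint_borel n)"
    by measurable
  ultimately have "(\<lambda>(r, w). A r i w) \<circ> (\<lambda>(r, w). (r, exp_weights n K w))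
      \<in> measurable (joint_borel n) (count_space UNIV)"
    by (rule measurable_comp[rotated])
  then show "(\<lambda>(r, w). exp_alg n K A r i w) \<in> measurable (joint_borel n) (count_space UNIV)"
    by (simp add: exp_alg_def comp_def case_prod_beta')
qed

lemma joint_space_exp_dists:
  assumes D: "D \<in> weight_dists n"
  shows "joint_space n (exp_dists K D)
    = distr (joint_space n D) (joint_space n (exp_dists K D)) (\<lambda>(r, w). (r, exp_weights n K w))"
proof -
  let ?U = "uniform_measure lborel {0..1::real}"
  let ?P = "PiM {..<n} (exp_dists K D)"
  have D': "exp_dists K D \<in> weight_dists n" by (rule exp_dists_weight_dists[OF D])
  have "distr (PiM {..<n} D) ?P (compose {..<n} (\<lambda>x. exp (K * x)))
      = PiM {..<n} (\<lambda>i. distr (D i) (exp_dists K D i) (\<lambda>x. exp (K * x)))"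
    using D D' by (intro distr_PiM_finite_prob_space')
      (auto simp: weight_dists_prob_space measurable_cong_sets[OF weight_dists_sets weight_dists_sets])
  also have "\<dots> = ?P"
    by (intro PiM_cong refl) (auto simp: exp_dists_def intro: distr_cong)
  moreover have "compose {..<n} (\<lambda>x. exp (K * x)) = exp_weights n K"
    by (rule ext) (simp add: compose_def exp_weights_def)
  ultimately have P: "distr (PiM {..<n} D) ?P (exp_weights n K) = ?P" by simp
  have "exp_weights n K \<in> measurable (PiM {..<n} D) ?P"
    using exp_weights_measurable
    by (subst measurable_cong_sets[OF sets_PiM_cong sets_PiM_cong, of _ _ _ "\<lambda>_. borel" _ _ _ "\<lambda>_. borel"])
       (auto simp: weight_dists_sets[OF D] weight_dists_sets[OF D'])
  moreover have "sigma_finite_measure ?P"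
    using D' by (intro prob_space_imp_sigma_finite prob_space_PiM) (auto dest: weight_dists_prob_space)
  ultimately have "distr ?U ?U id \<Otimes>\<^sub>M distr (PiM {..<n} D) ?P (exp_weights n K)
      = distr (?U \<Otimes>\<^sub>M PiM {..<n} D) (?U \<Otimes>\<^sub>M ?P) (\<lambda>(r, w). (id r, exp_weights n K w))"
    by (intro pair_measure_distr) (auto simp: P)
  then show ?thesis
    unfolding joint_space_def P distr_id by (simp add: id_def)
qed

lemma EoR_exp_dists:
  assumes A: "A \<in> online_algs n" and D: "D \<in> weight_dists n"
  shows "EoR n (exp_dists K D) A = (\<integral>x. ratio (alg_val n A (fst x) (exp_weights n K (snd x)))
    (opt_val n (exp_weights n K (snd x))) \<partial>joint_space n D)"
proof -
  have D': "exp_dists K D \<in> weight_dists n" by (rule exp_dists_weight_dists[OF D])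
  have "(\<lambda>(r, w). (r, exp_weights n K w)) \<in> measurable (joint_space n D) (joint_space n (exp_dists K D))"
    unfolding measurable_joint_space[OF D] measurable_cong_sets[OF refl sets_joint_space[OF D']]
    by measurable
  then show ?thesis
    unfolding EoR_def
    by (subst joint_space_exp_dists[OF D], subst integral_distr)
       (auto simp: case_prod_beta' intro: ratio_alg_opt_measurable[OF A D'])
qed

lemma opt_val_exp_weights_pos: "j < n \<Longrightarrow> 0 < opt_val n (exp_weights n K w)"
  using opt_val_ge[of j n "exp_weights n K w"]
  by (simp add: exp_weights_def) (use exp_gt_zero[of "K * w j"] in linarith)

lemma ratio_exp_weights_le_exp_gap:
  assumes pick: "alg_set n A r (exp_weights n K w) = {i}" and "i < n" and "m < n"
  shows "ratio (alg_val n A r (exp_weights n K w)) (opt_val n (exp_weights n K w))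
    \<le> exp (- (K * (w m - w i)))"
proof -
  let ?v = "exp_weights n K w"
  have "ratio (alg_val n A r ?v) (opt_val n ?v) = exp (K * w i) / opt_val n ?v"
    using pick \<open>i < n\<close> opt_val_exp_weights_pos[OF \<open>i < n\<close>, of K w]
    by (simp add: alg_val_def ratio_def exp_weights_def)
  also have "\<dots> \<le> exp (K * w i) / exp (K * w m)"
  proof (rule divide_left_mono)
    show "exp (K * w m) \<le> opt_val n ?v"
      using opt_val_ge[OF \<open>m < n\<close>, of ?v] \<open>m < n\<close> by (simp add: exp_weights_def)
    show "0 < opt_val n ?v * exp (K * w m)"
      using opt_val_exp_weights_pos[OF \<open>m < n\<close>, of K w] by simp
  qed simp
  also have "\<dots> = exp (- (K * (w m - w i)))"
    by (simp add: exp_diff[symmetric] algebra_simps)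
  finally show ?thesis .
qed

lemma ratio_exp_weights_le:
  assumes w: "\<forall>j<n. 0 \<le> w j" and K: "0 \<le> K"
  shows "ratio (alg_val n A r (exp_weights n K w)) (opt_val n (exp_weights n K w))
    \<le> of_bool (alg_val n (exp_alg n K A) r w = opt_val n w) + exp (- (K * \<delta>))
      + of_bool (\<exists>a<n. \<exists>b<n. 0 < w b - w a \<and> w b - w a < \<delta>)"
    (is "?L \<le> ?success + ?E + ?tie")
proof -
  let ?v = "exp_weights n K w"
  have bounds: "?L \<le> 1" "0 \<le> ?success" "0 < ?E" "0 \<le> ?tie"
    by (simp_all add: ratio_alg_opt_le_1)
  have alg_set_eq: "alg_set n (exp_alg n K A) r w = alg_set n A r ?v"
    unfolding alg_set_def exp_alg_def ..
  show ?thesis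
  proof (cases "alg_val n (exp_alg n K A) r w = opt_val n w")
    case True
    then have "?success = 1" by simp
    with bounds show ?thesis by linarith
  next
    case miss: False
    show ?thesis
    proof (cases rule: alg_set_cases[of n A r ?v])
      case none
      with miss alg_set_eq have "0 < n"
        by (cases n) (auto simp: alg_val_def opt_val_eq_Max)
      with none opt_val_exp_weights_pos[of 0 n K w] have "?L = 0"
        by (simp add: alg_val_def ratio_def)
      with bounds show ?thesis by linarith
    next
      case (first i)
      obtain m where m: "m < n" "opt_val n w = w m"
        using opt_val_attained[OF _ w] first(1) by (metis gr_zeroI not_less_zero)
      have "w i < w m"
        using miss first(1,2) m alg_set_eq opt_val_ge[OF first(1), of w]
        by (auto simp: alg_val_def)
      show ?thesis
      proof (cases "w m - w i < \<delta>")
        case True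
        with \<open>w i < w m\<close> first(1) m(1) have "?tie = 1" by auto
        with bounds show ?thesis by linarith
      next
        case False
        have "?L \<le> exp (- (K * (w m - w i)))"
          using first(2,1) m(1) by (rule ratio_exp_weights_le_exp_gap)
        also have "\<dots> \<le> ?E" using False K by (simp add: mult_left_mono)
        finally show ?thesis using bounds by linarith
      qed
    qed
  qed
qed

lemma EoR_exp_dists_le:
  assumes A: "A \<in> online_algs n" and D: "D \<in> weight_dists n" and K: "0 \<le> K"
  shows "EoR n (exp_dists K D) A
    \<le> PbM n D (exp_alg n K A) + exp (- (K * \<delta>))
      + measure (joint_space n D) (near_ties (joint_space n D) {..<n} (\<lambda>j x. snd x j) \<delta>)"
proof -
  let ?J = "joint_space n D"
  let ?S = "{x \<in> space ?J. alg_val n (exp_alg n K A) (fst x) (snd x) = opt_val n (snd x)}"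
  let ?N = "near_ties ?J {..<n} (\<lambda>j x. snd x j) \<delta>"
  interpret prob_space ?J by (rule prob_space_joint_space[OF D])
  have sets: "?S \<in> sets ?J" "?N \<in> sets ?J"
    using success_set_sets[OF exp_alg_online[OF A] D]
    by (auto intro!: near_ties_sets simp: measurable_joint_space[OF D])
  have "EoR n (exp_dists K D) A
      = (\<integral>x. ratio (alg_val n A (fst x) (exp_weights n K (snd x)))
          (opt_val n (exp_weights n K (snd x))) \<partial>?J)"
    by (rule EoR_exp_dists[OF A D])
  also have "\<dots> \<le> (\<integral>x. indicator ?S x + exp (- (K * \<delta>)) + indicator ?N x \<partial>?J)"
  proof (rule integral_mono_AE')
    show "integrable ?J (\<lambda>x. indicator ?S x + exp (- (K * \<delta>)) + indicator ?N x :: real)"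
      using sets by (intro Bochner_Integration.integrable_add integrable_real_indicator)
        (auto simp: emeasure_space_1 less_top[symmetric])
    show "AE x in ?J. ratio (alg_val n A (fst x) (exp_weights n K (snd x)))
        (opt_val n (exp_weights n K (snd x))) \<le> indicator ?S x + exp (- (K * \<delta>)) + indicator ?N x"
      using AE_space AE_joint_space_nonneg[OF D]
    proof eventually_elim
      case (elim x)
      then have "ratio (alg_val n A (fst x) (exp_weights n K (snd x))) (opt_val n (exp_weights n K (snd x)))
          \<le> of_bool (alg_val n (exp_alg n K A) (fst x) (snd x) = opt_val n (snd x)) + exp (- (K * \<delta>))
            + of_bool (\<exists>a<n. \<exists>b<n. 0 < snd x b - snd x a \<and> snd x b - snd x a < \<delta>)"
        by (intro ratio_exp_weights_le K) auto
      also have "\<dots> = indicator ?S x + exp (- (K * \<delta>)) + indicator ?N x"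
        using elim unfolding indicator_def near_ties_def by (simp add: Bex_def)
      finally show ?case .
    qed
  qed (auto simp: indicator_def)
  also have "\<dots> = PbM n D (exp_alg n K A) + exp (- (K * \<delta>)) + measure ?J ?N"
    using sets by (simp add: Bochner_Integration.integral_add integrable_real_indicator
        emeasure_space_1 less_top[symmetric] PbM_def Int_absorb2 sets.sets_into_space prob_space)
  finally show ?thesis .
qed

lemma SUP_EoR_exp_dists_le:
  assumes D: "D \<in> weight_dists n" and e: "0 < e"
  obtains K where "(SUP A \<in> online_algs n. EoR n (exp_dists K D) A)
    \<le> (SUP A \<in> online_algs n. PbM n D A) + e"
proof -
  let ?J = "joint_space n D"
  interpret prob_space ?J by (rule prob_space_joint_space[OF D])
  obtain \<delta> where \<delta>: "0 < \<delta>" "measure ?J (near_ties ?J {..<n} (\<lambda>j x. snd x j) \<delta>) < e / 2"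
    by (rule measure_near_ties_small[of "{..<n}" "\<lambda>j x. snd x j" "e / 2"])
      (use e in \<open>auto simp: measurable_joint_space[OF D]\<close>)
  define K where "K = (\<bar>ln (e / 2)\<bar> + 1) / \<delta>"
  have K: "0 \<le> K" using \<delta>(1) by (simp add: K_def)
  have "- (K * \<delta>) < ln (e / 2)" using \<delta>(1) by (simp add: K_def)
  then have "exp (- (K * \<delta>)) < e / 2" using e by (metis exp_less_cancel_iff exp_ln half_gt_zero)
  moreover have "PbM n D (exp_alg n K A) \<le> (SUP A \<in> online_algs n. PbM n D A)"
    if "A \<in> online_algs n" for A
    using exp_alg_online[OF that] bdd_above_PbM[OF D] by (rule cSUP_upper)
  ultimately have "EoR n (exp_dists K D) A \<le> (SUP A \<in> online_algs n. PbM n D A) + e"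
    if "A \<in> online_algs n" for A
    using EoR_exp_dists_le[OF that D K, of \<delta>] that \<delta>(2) by fastforce
  then show ?thesis by (intro that cSUP_least online_algs_nonempty)
qed

theorem proposition3:
  fixes n :: nat
  shows "EoR_single n = PbM_single n"
proof -
  let ?EoR = "\<lambda>D. SUP A \<in> online_algs n. EoR n D A"
  let ?PbM = "\<lambda>D. SUP A \<in> online_algs n. PbM n D A"
  have bdd: "bdd_below (?EoR ` weight_dists n)" "bdd_below (?PbM ` weight_dists n)"
    by (auto intro!: bdd_belowI[of _ 0] SUP_EoR_nonneg SUP_PbM_nonneg)
  have "PbM_single n \<le> EoR_single n"
    unfolding PbM_single_def EoR_single_def
    by (rule cINF_mono[OF weight_dists_nonempty bdd(2)]) (use SUP_PbM_le_SUP_EoR in blast)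
  moreover have "EoR_single n \<le> PbM_single n"
    unfolding PbM_single_def EoR_single_def
  proof (rule cINF_greatest[OF weight_dists_nonempty], rule field_le_epsilon)
    fix D and e :: real assume D: "D \<in> weight_dists n" and "0 < e"
    then obtain K where "?EoR (exp_dists K D) \<le> ?PbM D + e" by (rule SUP_EoR_exp_dists_le)
    moreover have "(INF D \<in> weight_dists n. ?EoR D) \<le> ?EoR (exp_dists K D)"
      using bdd(1) exp_dists_weight_dists[OF D] by (rule cINF_lower)
    ultimately show "(INF D \<in> weight_dists n. ?EoR D) \<le> ?PbM D + e" by linarith
  qed
  ultimately show ?thesis by linarith
qed

end
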